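(* Let $R:\mathbb R^d\to(0,\infty)$ satisfy $|R(x)-R(y)|\le|x-y|$ for all $x,y$, and let $\rho(x,y)=\inf_\gamma\int_\gamma \frac{|dz|}{R(z)}$, the infimum over all piecewise $C^1$ curves $\gamma$ in $\mathbb R^d$ joining $x$ and $y$. Then for all $x,y\in\mathbb R^d$, $|x-y|\le\frac12R(x)$ implies $\rho(x,y)\le 1$. *)

theory Defs
  imports "HOL-Analysis.Analysis"
begin

definition path_cost_set :: "('a::euclidean_space \<Rightarrow> real) \<Rightarrow> 'a \<Rightarrow> 'a \<Rightarrow> real set" where
  "path_cost_set R x y =
     {I. \<exists>g. valid_path g \<and> pathstart g = x \<and> pathfinish g = y \<and>
          ((\<lambda>t. norm (vector_derivative g (at t)) / R (g t)) has_integral I) {0..1}}"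

definition rho :: "('a::euclidean_space \<Rightarrow> real) \<Rightarrow> 'a \<Rightarrow> 'a \<Rightarrow> real" where
  "rho R x y = Inf (path_cost_set R x y)"

end

theory Submission
  imports Defs
begin

text \<open>Test rho with the straight segment from x to y: along it the 1-Lipschitz
  weight R stays above R x - |x - y| \<ge> R x / 2 \<ge> |x - y|, so the integrand
  |y - x| / R is at most 1.\<close>

lemma path_cost_set_nonneg:
  assumes "\<And>z. 0 \<le> R z" and "I \<in> path_cost_set R x y"
  shows "0 \<le> I"
proof -
  obtain g where "((\<lambda>t. norm (vector_derivative g (at t)) / R (g t)) has_integral I) {0..1}"
    using assms(2) unfolding path_cost_set_def by blast
  then show ?thesis
    by (rule has_integral_nonneg) (simp add: assms(1))
qed

lemma rho_le_path_cost:
  assumes "\<And>z. 0 \<le> R z" and "I \<in> path_cost_set R x y"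
  shows "rho R x y \<le> I"
  unfolding rho_def
  using assms path_cost_set_nonneg by (metis bdd_belowI cInf_lower)

lemma rho_le_dist_div_lower_bound:
  fixes R :: "'a::euclidean_space \<Rightarrow> real"
  assumes nonneg: "\<And>z. 0 \<le> R z"
    and cont: "continuous_on (closed_segment x y) R"
    and m: "0 < m" "\<And>z. z \<in> closed_segment x y \<Longrightarrow> m \<le> R z"
  shows "rho R x y \<le> dist x y / m"
proof -
  define f where "f t = norm (y - x) / R (linepath x y t)" for t
  have on_segment: "linepath x y t \<in> closed_segment x y" if "t \<in> {0..1}" for t
    using that by (rule linepath_in_path)
  have "continuous_on {0..1} (\<lambda>t. R (linepath x y t))"
    using continuous_on_compose2[OF cont continuous_on_linepath] on_segment by blast
  moreover have "R (linepath x y t) \<noteq> 0" if "t \<in> {0..1}" for t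
    using m on_segment[OF that] by fastforce
  ultimately have "continuous_on {0..1} f"
    unfolding f_def by (intro continuous_intros) auto
  then have integrable: "f integrable_on {0..1}"
    by (rule integrable_continuous_interval)
  have "integral {0..1} f \<in> path_cost_set R x y"
    using integrable unfolding path_cost_set_def f_def
    by (auto intro!: exI[of _ "linepath x y"])
  then have "rho R x y \<le> integral {0..1} f"
    by (rule rho_le_path_cost[OF nonneg])
  also have "\<dots> \<le> integral {0..1} (\<lambda>t::real. dist x y / m)"
  proof (rule integral_le[OF integrable])
    fix t :: real assume "t \<in> {0..1}"
    then have "m \<le> R (linepath x y t)"
      using m(2) on_segment by blast
    then show "f t \<le> dist x y / m"
      unfolding f_def dist_norm norm_minus_commute[of x y]
      using m(1) by (intro divide_left_mono) simp_all
  qed (rule integrable_const_ivl)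
  finally show ?thesis by simp
qed

theorem lemma1p4:
  fixes R :: "'a::euclidean_space \<Rightarrow> real" and x y :: 'a
  assumes pos: "\<And>z. R z > 0"
    and lip: "\<And>u v. \<bar>R u - R v\<bar> \<le> norm (u - v)"
    and close: "norm (x - y) \<le> R x / 2"
  shows "rho R x y \<le> 1"
proof -
  have "1-lipschitz_on UNIV R"
    using lip by (intro lipschitz_onI) (simp_all add: dist_real_def dist_norm)
  then have cont: "continuous_on (closed_segment x y) R"
    using lipschitz_on_continuous_on continuous_on_subset by blast
  have lower: "R x / 2 \<le> R z" if "z \<in> closed_segment x y" for z
  proof -
    have "dist z x \<le> dist x y"
      using dist_in_closed_segment[OF that] by blast
    then show ?thesis
      using lip[of z x] close by (simp add: dist_norm)
  qed
  have "rho R x y \<le> dist x y / (R x / 2)"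
    using pos cont lower by (intro rho_le_dist_div_lower_bound) (simp_all add: less_imp_le)
  also have "\<dots> \<le> 1"
    using pos[of x] close by (simp add: dist_norm)
  finally show ?thesis .
qed

end
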